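(* Let $X$ be a non-empty compact ultrametric space with a finite similarity structure $\mathrm{Sim}_X$ such that there are only finitely many $\mathrm{Sim}_X$-equivalence classes of balls. Then for every $n\in\mathbb N$ the sub-level complex $K_{\le n}$ is locally finite.
   Context: A *ball* in $X$ is a closed metric ball of positive radius. A *finite similarity structure* $\mathrm{Sim}_X$ assigns to each ordered pair of balls $B_1,B_2$ a finite (possibly empty) set $\mathrm{Sim}_X(B_1,B_2)$ of surjective similarities $B_1\to B_2$, closed under identities, inverses, compositions, and restrictions to sub-balls. Balls $A,B$ are *$\mathrm{Sim}_X$-equivalent* if $\mathrm{Sim}_X(A,B)\neq\emptyset$. An embedding $h:B\to X$ ($B$ a ball) is *locally determined by* $\mathrm{Sim}_X$ if every $x\in B$ lies in a ball $B'\subseteq B$ with $h(B')$ a ball and $h|_{B'}\in\mathrm{Sim}_X(B',h(B'))$. Let $\mathcal S$ be the set of pairs $(f,B)$ with $B$ a ball and $f:B\to X$ an embedding locally determined by $\mathrm{Sim}_X$; $(f_1,B_1)\sim(f_2,B_2)$ iff $f_2h=f_1$ for some $h\in\mathrm{Sim}_X(B_1,B_2)$; $[f,B]$ is the class. A *vertex of height $k$* is a set $v=\{[f_1,B_1],\dots,[f_k,B_k]\}$ of $k$ classes with $f_1(B_1),\dots,f_k(B_k)$ pairwise disjoint and with union $X$. If $[f,B]\in v$ and $B$ has more than one point, the *simple expansion of $v$ at $[f,B]$* replaces $[f,B]$ by the classes $[f|_A,A]$, $A$ ranging over the maximal proper sub-balls of $B$; write $u\nearrow v$ if $v$ is a simple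 expansion of $u$. $v\le w$ means there is a chain $v=v_1\nearrow\cdots\nearrow v_n=w$ ($n\ge1$). The *similarity complex* $K$ has these vertices and $n$-simplices the chains $v_0<\dots<v_n$. $K_{\le n}$ is the full subcomplex of $K$ spanned by vertices of height $\le n$. *)

theory Defs
  imports "HOL-Analysis.Analysis" "HOL-Library.FuncSet"
begin

text \<open>The space X is a subset of a metric space type, with the induced metric.\<close>

definition ultrametric :: "'a::metric_space set \<Rightarrow> bool" where
  "ultrametric X \<longleftrightarrow>
     (\<forall>x\<in>X. \<forall>y\<in>X. \<forall>z\<in>X. dist x z \<le> max (dist x y) (dist y z))"

definition is_ball :: "'a::metric_space set \<Rightarrow> 'a set \<Rightarrow> bool" where
  "is_ball X B \<longleftrightarrow> (\<exists>x\<in>X. \<exists>r>0. B = {y\<in>X. dist x y \<le> r})"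

definition similarity :: "'a::metric_space set \<Rightarrow> 'a set \<Rightarrow> ('a \<Rightarrow> 'a) \<Rightarrow> bool" where
  "similarity B1 B2 f \<longleftrightarrow> f \<in> extensional B1 \<and> f ` B1 = B2 \<and>
     (\<exists>l>0. \<forall>x\<in>B1. \<forall>y\<in>B1. dist (f x) (f y) = l * dist x y)"

definition finite_sim_structure ::
  "'a::metric_space set \<Rightarrow> ('a set \<Rightarrow> 'a set \<Rightarrow> ('a \<Rightarrow> 'a) set) \<Rightarrow> bool" where
  "finite_sim_structure X Sim \<longleftrightarrow>
     (\<forall>B1 B2. \<not> (is_ball X B1 \<and> is_ball X B2) \<longrightarrow> Sim B1 B2 = {}) \<and>
     (\<forall>B1 B2. finite (Sim B1 B2) \<and> (\<forall>f\<in>Sim B1 B2. similarity B1 B2 f)) \<and>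
     (\<forall>B. is_ball X B \<longrightarrow> restrict id B \<in> Sim B B) \<and>
     (\<forall>B1 B2 f. f \<in> Sim B1 B2 \<longrightarrow> restrict (inv_into B1 f) B2 \<in> Sim B2 B1) \<and>
     (\<forall>B1 B2 B3 f g. f \<in> Sim B1 B2 \<longrightarrow> g \<in> Sim B2 B3 \<longrightarrow> compose B1 g f \<in> Sim B1 B3) \<and>
     (\<forall>B1 B2 f A. f \<in> Sim B1 B2 \<longrightarrow> is_ball X A \<longrightarrow> A \<subseteq> B1 \<longrightarrow>
         restrict f A \<in> Sim A (f ` A))"

definition sim_equiv_rel :: "'a::metric_space set \<Rightarrow> ('a set \<Rightarrow> 'a set \<Rightarrow> ('a \<Rightarrow> 'a) set) \<Rightarrow> ('a set \<times> 'a set) set" where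
  "sim_equiv_rel X Sim = {(A, B). is_ball X A \<and> is_ball X B \<and> Sim A B \<noteq> {}}"

definition finitely_many_ball_classes ::
  "'a::metric_space set \<Rightarrow> ('a set \<Rightarrow> 'a set \<Rightarrow> ('a \<Rightarrow> 'a) set) \<Rightarrow> bool" where
  "finitely_many_ball_classes X Sim \<longleftrightarrow>
     finite ({B. is_ball X B} // sim_equiv_rel X Sim)"

definition embedding_into :: "'a::metric_space set \<Rightarrow> 'a set \<Rightarrow> ('a \<Rightarrow> 'a) \<Rightarrow> bool" where
  "embedding_into X B h \<longleftrightarrow> inj_on h B \<and> h ` B \<subseteq> X \<and> continuous_on B h \<and>
     continuous_on (h ` B) (inv_into B h)"

definition locally_determined ::
  "'a::metric_space set \<Rightarrow> ('a set \<Rightarrow> 'a set \<Rightarrow> ('a \<Rightarrow> 'a) set) \<Rightarrow> 'a set \<Rightarrow> ('a \<Rightarrow> 'a) \<Rightarrow> bool" where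
  "locally_determined X Sim B h \<longleftrightarrow>
     (\<forall>x\<in>B. \<exists>B'. is_ball X B' \<and> B' \<subseteq> B \<and> x \<in> B' \<and> is_ball X (h ` B') \<and>
        restrict h B' \<in> Sim B' (h ` B'))"

definition pairsS ::
  "'a::metric_space set \<Rightarrow> ('a set \<Rightarrow> 'a set \<Rightarrow> ('a \<Rightarrow> 'a) set) \<Rightarrow> (('a \<Rightarrow> 'a) \<times> 'a set) set" where
  "pairsS X Sim = {(f, B). is_ball X B \<and> f \<in> extensional B \<and> embedding_into X B f \<and>
                      locally_determined X Sim B f}"

definition pair_rel ::
  "'a::metric_space set \<Rightarrow> ('a set \<Rightarrow> 'a set \<Rightarrow> ('a \<Rightarrow> 'a) set) \<Rightarrow>
   ((('a \<Rightarrow> 'a) \<times> 'a set) \<times> (('a \<Rightarrow> 'a) \<times> 'a set)) set" where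
  "pair_rel X Sim = {((f1, B1), (f2, B2)). (f1, B1) \<in> pairsS X Sim \<and> (f2, B2) \<in> pairsS X Sim \<and>
       (\<exists>h\<in>Sim B1 B2. \<forall>x\<in>B1. f2 (h x) = f1 x)}"

definition pair_classes ::
  "'a::metric_space set \<Rightarrow> ('a set \<Rightarrow> 'a set \<Rightarrow> ('a \<Rightarrow> 'a) set) \<Rightarrow> (('a \<Rightarrow> 'a) \<times> 'a set) set set" where
  "pair_classes X Sim = pairsS X Sim // pair_rel X Sim"

text \<open>Image f(B) of a class [f,B] (independent of the representative).\<close>
definition class_image :: "(('a \<Rightarrow> 'a) \<times> 'a set) set \<Rightarrow> 'a set" where
  "class_image c = (\<Union>(f, B)\<in>c. f ` B)"

text \<open>Vertices; the height of a vertex v is card v.\<close>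
definition is_vertex ::
  "'a::metric_space set \<Rightarrow> ('a set \<Rightarrow> 'a set \<Rightarrow> ('a \<Rightarrow> 'a) set) \<Rightarrow>
   (('a \<Rightarrow> 'a) \<times> 'a set) set set \<Rightarrow> bool" where
  "is_vertex X Sim v \<longleftrightarrow> finite v \<and> v \<subseteq> pair_classes X Sim \<and>
     (\<forall>c\<in>v. \<forall>d\<in>v. c \<noteq> d \<longrightarrow> class_image c \<inter> class_image d = {}) \<and>
     (\<Union>c\<in>v. class_image c) = X"

definition max_proper_subball :: "'a::metric_space set \<Rightarrow> 'a set \<Rightarrow> 'a set \<Rightarrow> bool" where
  "max_proper_subball X A B \<longleftrightarrow> is_ball X A \<and> A \<subset> B \<and>
     \<not> (\<exists>A'. is_ball X A' \<and> A \<subset> A' \<and> A' \<subset> B)"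

definition simple_expansion ::
  "'a::metric_space set \<Rightarrow> ('a set \<Rightarrow> 'a set \<Rightarrow> ('a \<Rightarrow> 'a) set) \<Rightarrow>
   (('a \<Rightarrow> 'a) \<times> 'a set) set set \<Rightarrow> (('a \<Rightarrow> 'a) \<times> 'a set) set set \<Rightarrow> bool" where
  "simple_expansion X Sim u v \<longleftrightarrow> is_vertex X Sim u \<and> is_vertex X Sim v \<and>
     (\<exists>c\<in>u. \<exists>f B. (f, B) \<in> c \<and> (\<exists>x\<in>B. \<exists>y\<in>B. x \<noteq> y) \<and>
        v = (u - {c}) \<union> {pair_rel X Sim `` {(restrict f A, A)} | A. max_proper_subball X A B})"

text \<open>v \<le> w: chain of simple expansions of length n \<ge> 1 (n = 1 means v = w).\<close>
definition vertex_le ::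
  "'a::metric_space set \<Rightarrow> ('a set \<Rightarrow> 'a set \<Rightarrow> ('a \<Rightarrow> 'a) set) \<Rightarrow>
   (('a \<Rightarrow> 'a) \<times> 'a set) set set \<Rightarrow> (('a \<Rightarrow> 'a) \<times> 'a set) set set \<Rightarrow> bool" where
  "vertex_le X Sim v w \<longleftrightarrow> is_vertex X Sim v \<and> (simple_expansion X Sim)\<^sup>*\<^sup>* v w"

text \<open>Simplices of K_{\<le>n}: finite nonempty chains (totally ordered sets w.r.t. \<le>)
  of vertices of height \<le> n; a chain v0 < ... < vm is identified with its set of vertices.\<close>
definition simplices_le ::
  "'a::metric_space set \<Rightarrow> ('a set \<Rightarrow> 'a set \<Rightarrow> ('a \<Rightarrow> 'a) set) \<Rightarrow> nat \<Rightarrow>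
   (('a \<Rightarrow> 'a) \<times> 'a set) set set set set" where
  "simplices_le X Sim n = {\<sigma>. finite \<sigma> \<and> \<sigma> \<noteq> {} \<and>
     (\<forall>v\<in>\<sigma>. is_vertex X Sim v \<and> card v \<le> n) \<and>
     (\<forall>v\<in>\<sigma>. \<forall>w\<in>\<sigma>. vertex_le X Sim v w \<or> vertex_le X Sim w v)}"

definition K_le_locally_finite ::
  "'a::metric_space set \<Rightarrow> ('a set \<Rightarrow> 'a set \<Rightarrow> ('a \<Rightarrow> 'a) set) \<Rightarrow> nat \<Rightarrow> bool" where
  "K_le_locally_finite X Sim n \<longleftrightarrow>
     (\<forall>v. is_vertex X Sim v \<and> card v \<le> n \<longrightarrow> finite {\<sigma>\<in>simplices_le X Sim n. v \<in> \<sigma>})"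

end

theory Submission
  imports Defs
begin

(* A simplex of K_{<=n} containing a vertex v is a chain of vertices of height <= n that are
   all comparable with v.  Every simple expansion u -> w raises the height (card w > card u),
   so each such vertex is reachable from v by at most n forward or backward expansion steps.
   Hence it suffices that every vertex has finitely many simple expansions (immediate: one
   for each of its finitely many classes) and is a simple expansion of only finitely many
   vertices.  The latter is the heart of the proof: a vertex u with u -> v is determined by v,
   the set N of new classes and the expanded class c; and for given N there are only finitely
   many possible c, because c has a representative (phi, R) whose ball R is one of finitely
   many representatives of the Sim-classes of balls and whose map phi is glued from its
   restrictions to the maximal sub-balls of R, each of which represents a class of N. *)

lemma similarity_homeomorphism:
  assumes "similarity B1 B2 h"
  shows "homeomorphism B1 B2 h (inv_into B1 h)"
proof -
  obtain l where l: "l > 0"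
    and scale: "\<And>x y. x \<in> B1 \<Longrightarrow> y \<in> B1 \<Longrightarrow> dist (h x) (h y) = l * dist x y"
    and onto: "h ` B1 = B2"
    using assms unfolding similarity_def by blast
  have inj: "inj_on h B1"
    by (rule inj_onI) (metis scale l dist_eq_0_iff mult_eq_0_iff less_irrefl)
  have "l-lipschitz_on B1 h"
    using l scale by (intro lipschitz_onI) auto
  moreover have "(1 / l)-lipschitz_on B2 (inv_into B1 h)"
  proof (rule lipschitz_onI)
    fix y y' assume "y \<in> B2" "y' \<in> B2"
    then obtain x x' where "x \<in> B1" "x' \<in> B1" "y = h x" "y' = h x'"
      using onto by blast
    then show "dist (inv_into B1 h y) (inv_into B1 h y') \<le> 1 / l * dist y y'"
      using inj l scale by simp
  qed (use l in simp)
  ultimately show ?thesis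
    using inj onto by (intro homeomorphismI lipschitz_on_continuous_on) (auto intro: inv_into_into)
qed

lemma embedding_into_iff_homeomorphism:
  "embedding_into X B h \<longleftrightarrow> h ` B \<subseteq> X \<and> (\<exists>k. homeomorphism B (h ` B) h k)"
proof
  assume "embedding_into X B h"
  then show "h ` B \<subseteq> X \<and> (\<exists>k. homeomorphism B (h ` B) h k)"
    unfolding embedding_into_def
    by (intro conjI exI[of _ "inv_into B h"] homeomorphismI) (auto intro: inv_into_into f_inv_into_f)
next
  assume "h ` B \<subseteq> X \<and> (\<exists>k. homeomorphism B (h ` B) h k)"
  then obtain k where sub: "h ` B \<subseteq> X" and hk: "homeomorphism B (h ` B) h k" by blast
  have inj: "inj_on h B"
    using hk by (metis homeomorphism_apply1 inj_on_inverseI)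
  have "inv_into B h y = k y" if y: "y \<in> h ` B" for y
  proof -
    obtain x where "x \<in> B" "y = h x" using y by blast
    then show ?thesis using inj hk by (simp add: homeomorphism_apply1)
  qed
  then have "continuous_on (h ` B) (inv_into B h)"
    by (rule continuous_on_cong[THEN iffD2, OF refl _ homeomorphism_cont2[OF hk]])
  then show "embedding_into X B h"
    unfolding embedding_into_def using sub inj homeomorphism_cont1[OF hk] by blast
qed

lemma embedding_precompose:
  assumes "embedding_into X D g" and "similarity A D s" and "\<And>x. x \<in> A \<Longrightarrow> \<phi> x = g (s x)"
  shows "embedding_into X A \<phi>"
proof -
  obtain k where sub: "g ` D \<subseteq> X" and gk: "homeomorphism D (g ` D) g k"
    using assms(1) unfolding embedding_into_iff_homeomorphism by blast
  have sA: "s ` A = D" using assms(2) unfolding similarity_def by blast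
  have hom: "homeomorphism A (g ` D) (g \<circ> s) (inv_into A s \<circ> k)"
    by (rule homeomorphism_compose[OF similarity_homeomorphism[OF assms(2)] gk])
  have img: "\<phi> ` A = g ` D"
    using assms(3) sA by (auto simp: image_iff)
  have "homeomorphism A (\<phi> ` A) \<phi> (inv_into A s \<circ> k)"
    by (rule homeomorphism_cong[OF hom refl img]) (simp_all add: assms(3))
  then show ?thesis
    unfolding embedding_into_iff_homeomorphism using sub img by blast
qed

(* Functions on a finite union of sets are determined by their restrictions to the members;
   if each restriction ranges over a finite set, only finitely many functions arise. *)
lemma finite_glued_functions:
  assumes "finite \<A>" and "\<And>A. A \<in> \<A> \<Longrightarrow> finite (P A)"
  shows "finite {\<phi> \<in> extensional (\<Union>\<A>). \<forall>A\<in>\<A>. restrict \<phi> A \<in> P A}" (is "finite ?F")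
proof -
  let ?pieces = "\<lambda>\<phi>. restrict (\<lambda>A. restrict \<phi> A) \<A>"
  have "inj_on ?pieces ?F"
  proof (rule inj_onI)
    fix \<phi> \<psi> assume \<phi>: "\<phi> \<in> ?F" and \<psi>: "\<psi> \<in> ?F" and eq: "?pieces \<phi> = ?pieces \<psi>"
    show "\<phi> = \<psi>"
    proof (rule extensionalityI)
      fix x assume "x \<in> \<Union>\<A>"
      then obtain A where "A \<in> \<A>" "x \<in> A" by blast
      then show "\<phi> x = \<psi> x"
        using fun_cong[OF eq, of A] by (metis restrict_apply')
    qed (use \<phi> \<psi> in auto)
  qed
  moreover have "?pieces ` ?F \<subseteq> PiE \<A> P" by auto
  moreover have "finite (PiE \<A> P)" using assms by (rule finite_PiE)
  ultimately show ?thesis by (meson finite_imageD finite_subset)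
qed

lemma relpowp_conversep:
  fixes r :: "'a \<Rightarrow> 'a \<Rightarrow> bool"
  shows "(r\<inverse>\<inverse> ^^ k) x y \<longleftrightarrow> (r ^^ k) y x"
proof (induction k arbitrary: y)
  case (Suc k)
  show ?case
  proof
    assume "(r\<inverse>\<inverse> ^^ Suc k) x y"
    then obtain z where z: "(r\<inverse>\<inverse> ^^ k) x z" "r\<inverse>\<inverse> z y" by (rule relpowp_Suc_E)
    from z(1) have "(r ^^ k) z x" by (rule Suc.IH[THEN iffD1])
    with z(2) show "(r ^^ Suc k) y x" by (blast intro: relpowp_Suc_I2)
  next
    assume "(r ^^ Suc k) y x"
    then obtain z where z: "r y z" "(r ^^ k) z x" by (rule relpowp_Suc_E2)
    from z(2) have "(r\<inverse>\<inverse> ^^ k) x z" by (rule Suc.IH[THEN iffD2])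
    with z(1) show "(r\<inverse>\<inverse> ^^ Suc k) x y" by (blast intro: relpowp_Suc_I)
  qed
qed auto

lemma relpowp_measure_increase:
  fixes \<mu> :: "'a \<Rightarrow> nat"
  assumes "\<And>x y. r x y \<Longrightarrow> \<mu> x < \<mu> y" and "(r ^^ k) x y"
  shows "\<mu> x + k \<le> \<mu> y"
  using assms(2)
proof (induction k arbitrary: y)
  case (Suc k)
  then obtain z where "(r ^^ k) x z" "r z y" by (auto elim: relpowp_Suc_E)
  then show ?case using Suc.IH assms(1)[of z y] by fastforce
qed simp

lemma finite_relpowp_successors:
  assumes fin: "\<And>x. I x \<Longrightarrow> finite {y. r x y}"
    and inv: "\<And>x y. r x y \<Longrightarrow> I x \<Longrightarrow> I y" and "I x"
  shows "finite {y. (r ^^ k) x y}"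
proof (induction k)
  case (Suc k)
  have "I z" if "(r ^^ k) x z" for z
    using relpowp_imp_rtranclp[OF that]
    by (induction rule: rtranclp_induct) (use \<open>I x\<close> inv in blast)+
  then have "finite (\<Union>z\<in>{z. (r ^^ k) x z}. {y. r z y})"
    using Suc.IH fin by (intro finite_UN_I) auto
  moreover have "{y. (r ^^ Suc k) x y} \<subseteq> (\<Union>z\<in>{z. (r ^^ k) x z}. {y. r z y})"
    by (auto elim: relpowp_Suc_E)
  ultimately show ?case by (rule finite_subset[rotated])
qed simp

lemma inj_on_image_psubset_iff:
  assumes "inj_on f S" and "C \<subseteq> S" and "D \<subseteq> S"
  shows "f ` C \<subset> f ` D \<longleftrightarrow> C \<subset> D"
proof -
  have "f ` C \<subseteq> f ` D \<longleftrightarrow> C \<subseteq> D"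
    using assms inj_on_image_mem_iff[OF assms(1)] by blast
  moreover have "f ` C = f ` D \<longleftrightarrow> C = D" by (rule inj_on_image_eq_iff[OF assms])
  ultimately show ?thesis by blast
qed

lemma max_proper_subballD: "max_proper_subball X A B \<Longrightarrow> is_ball X A \<and> A \<subset> B"
  unfolding max_proper_subball_def by blast

lemma ball_nonempty: "is_ball X A \<Longrightarrow> A \<noteq> {}"
  unfolding is_ball_def by force

lemma is_vertexD:
  assumes "is_vertex X Sim u"
  shows "finite u" and "u \<subseteq> pair_classes X Sim"
    and "\<And>c d. c \<in> u \<Longrightarrow> d \<in> u \<Longrightarrow> c \<noteq> d \<Longrightarrow> class_image c \<inter> class_image d = {}"
    and "(\<Union>c\<in>u. class_image c) = X"
  using assms unfolding is_vertex_def by auto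

definition children ::
  "'a::metric_space set \<Rightarrow> ('a set \<Rightarrow> 'a set \<Rightarrow> ('a \<Rightarrow> 'a) set) \<Rightarrow> ('a \<Rightarrow> 'a) \<Rightarrow> 'a set \<Rightarrow>
   (('a \<Rightarrow> 'a) \<times> 'a set) set set" where
  "children X Sim f B = {pair_rel X Sim `` {(restrict f A, A)} | A. max_proper_subball X A B}"

lemma children_image:
  "children X Sim f B = (\<lambda>A. pair_rel X Sim `` {(restrict f A, A)}) ` {A. max_proper_subball X A B}"
  unfolding children_def by auto

(* All restrictions of f to maximal proper sub-balls of B again belong to S.  This holds
   whenever [f,B] is expanded, and it makes the children independent of the representative. *)
definition restrictions_in_S ::
  "'a::metric_space set \<Rightarrow> ('a set \<Rightarrow> 'a set \<Rightarrow> ('a \<Rightarrow> 'a) set) \<Rightarrow> ('a \<Rightarrow> 'a) \<Rightarrow> 'a set \<Rightarrow> bool" where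
  "restrictions_in_S X Sim f B \<longleftrightarrow>
     (\<forall>A. max_proper_subball X A B \<longrightarrow> (restrict f A, A) \<in> pairsS X Sim)"

lemma simple_expansion_children:
  "simple_expansion X Sim u v \<longleftrightarrow> is_vertex X Sim u \<and> is_vertex X Sim v \<and>
     (\<exists>c\<in>u. \<exists>f B. (f, B) \<in> c \<and> (\<exists>x\<in>B. \<exists>y\<in>B. x \<noteq> y) \<and> v = (u - {c}) \<union> children X Sim f B)"
  unfolding simple_expansion_def children_def by simp

definition glued_maps ::
  "'a::metric_space set \<Rightarrow> (('a \<Rightarrow> 'a) \<times> 'a set) set set \<Rightarrow> 'a set \<Rightarrow> ('a \<Rightarrow> 'a) set" where
  "glued_maps X N R = {\<phi> \<in> extensional (\<Union>{A. max_proper_subball X A R}).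
     \<forall>A\<in>{A. max_proper_subball X A R}. restrict \<phi> A \<in> (\<Union>d\<in>N. {\<psi>. (\<psi>, A) \<in> d})}"

locale sim_structure =
  fixes X :: "'a::metric_space set" and Sim :: "'a set \<Rightarrow> 'a set \<Rightarrow> ('a \<Rightarrow> 'a) set"
  assumes finite_sim: "finite_sim_structure X Sim"
begin

lemma Sim_balls: "h \<in> Sim B1 B2 \<Longrightarrow> is_ball X B1 \<and> is_ball X B2"
  using finite_sim unfolding finite_sim_structure_def by (elim conjE) blast

lemma Sim_finite: "finite (Sim B1 B2)"
  using finite_sim unfolding finite_sim_structure_def by (elim conjE) blast

lemma Sim_similarity: "h \<in> Sim B1 B2 \<Longrightarrow> similarity B1 B2 h"
  using finite_sim unfolding finite_sim_structure_def by (elim conjE) blast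

lemma Sim_id: "is_ball X B \<Longrightarrow> restrict id B \<in> Sim B B"
  using finite_sim unfolding finite_sim_structure_def by (elim conjE) blast

lemma Sim_inv: "h \<in> Sim B1 B2 \<Longrightarrow> restrict (inv_into B1 h) B2 \<in> Sim B2 B1"
  using finite_sim unfolding finite_sim_structure_def by (elim conjE) blast

lemma Sim_comp: "h \<in> Sim B1 B2 \<Longrightarrow> g \<in> Sim B2 B3 \<Longrightarrow> compose B1 g h \<in> Sim B1 B3"
  using finite_sim unfolding finite_sim_structure_def by (elim conjE) blast

lemma Sim_restrict: "h \<in> Sim B1 B2 \<Longrightarrow> is_ball X A \<Longrightarrow> A \<subseteq> B1 \<Longrightarrow> restrict h A \<in> Sim A (h ` A)"
  using finite_sim unfolding finite_sim_structure_def by (elim conjE) blast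

lemma Sim_image: "h \<in> Sim B1 B2 \<Longrightarrow> h ` B1 = B2"
  using Sim_similarity unfolding similarity_def by blast

lemma Sim_inj: "h \<in> Sim B1 B2 \<Longrightarrow> inj_on h B1"
  using similarity_homeomorphism[OF Sim_similarity] by (metis homeomorphism_apply1 inj_on_inverseI)

lemma Sim_image_ball_iff:
  assumes h: "h \<in> Sim B0 B" and A: "A \<subseteq> B0"
  shows "is_ball X (h ` A) \<longleftrightarrow> is_ball X A"
proof
  assume "is_ball X A"
  then show "is_ball X (h ` A)" using Sim_balls[OF Sim_restrict[OF h _ A]] by blast
next
  assume hA: "is_ball X (h ` A)"
  have "h ` A \<subseteq> B" using A Sim_image[OF h] by blast
  then have "restrict (inv_into B0 h) B ` h ` A = inv_into B0 h ` h ` A"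
    by (intro image_cong) auto
  then have "restrict (inv_into B0 h) B ` h ` A = A"
    using inv_into_image_cancel[OF Sim_inj[OF h] A] by simp
  moreover have "restrict (restrict (inv_into B0 h) B) (h ` A) \<in> Sim (h ` A) (restrict (inv_into B0 h) B ` h ` A)"
    using Sim_restrict[OF Sim_inv[OF h] hA \<open>h ` A \<subseteq> B\<close>] .
  ultimately show "is_ball X A" using Sim_balls by metis
qed

lemma max_subball_image:
  assumes h: "h \<in> Sim B0 B" and A: "A \<subseteq> B0"
  shows "max_proper_subball X (h ` A) B \<longleftrightarrow> max_proper_subball X A B0"
proof -
  have inj: "inj_on h B0" and onto: "h ` B0 = B" using Sim_inj[OF h] Sim_image[OF h] .
  have between: "(\<exists>A'. is_ball X A' \<and> h ` A \<subset> A' \<and> A' \<subset> B) \<longleftrightarrow>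
      (\<exists>C. is_ball X C \<and> A \<subset> C \<and> C \<subset> B0)"
  proof
    assume "\<exists>A'. is_ball X A' \<and> h ` A \<subset> A' \<and> A' \<subset> B"
    then obtain A' where A': "is_ball X A'" "h ` A \<subset> A'" "A' \<subset> B" by blast
    define C where "C = B0 \<inter> h -` A'"
    have C: "C \<subseteq> B0" "h ` C = A'" using A'(3) onto unfolding C_def by auto
    then show "\<exists>C. is_ball X C \<and> A \<subset> C \<and> C \<subset> B0"
      using A' A Sim_image_ball_iff[OF h] inj_on_image_psubset_iff[OF inj] onto
      by (metis subset_refl)
  next
    assume "\<exists>C. is_ball X C \<and> A \<subset> C \<and> C \<subset> B0"
    then obtain C where C: "is_ball X C" "A \<subset> C" "C \<subset> B0" by blast
    then show "\<exists>A'. is_ball X A' \<and> h ` A \<subset> A' \<and> A' \<subset> B"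
      using A Sim_image_ball_iff[OF h] inj_on_image_psubset_iff[OF inj] onto
      by (metis psubset_imp_subset subset_refl)
  qed
  show ?thesis
    unfolding max_proper_subball_def between
    using Sim_image_ball_iff[OF h A] inj_on_image_psubset_iff[OF inj A subset_refl] onto by simp
qed

lemma max_subballs_image:
  assumes h: "h \<in> Sim B0 B"
  shows "{A. max_proper_subball X A B} = (`) h ` {A. max_proper_subball X A B0}"
proof (intro equalityI subsetI)
  fix A' assume "A' \<in> {A. max_proper_subball X A B}"
  then have A': "max_proper_subball X A' B" "A' \<subseteq> B"
    unfolding max_proper_subball_def by auto
  define C where "C = B0 \<inter> h -` A'"
  have "C \<subseteq> B0" "h ` C = A'" using A'(2) Sim_image[OF h] unfolding C_def by auto
  then show "A' \<in> (`) h ` {A. max_proper_subball X A B0}"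
    using A'(1) max_subball_image[OF h] by blast
next
  fix A' assume "A' \<in> (`) h ` {A. max_proper_subball X A B0}"
  then obtain A where A: "max_proper_subball X A B0" and A': "A' = h ` A" by blast
  then show "A' \<in> {A. max_proper_subball X A B}"
    using max_subball_image[OF h] max_proper_subballD[OF A] by auto
qed

lemma pairsS_D:
  assumes "(f, B) \<in> pairsS X Sim"
  shows "is_ball X B" "inj_on f B" "f ` B \<subseteq> X"
  using assms unfolding pairsS_def embedding_into_def by auto

lemma pair_relI:
  assumes "(f1, B1) \<in> pairsS X Sim" "(f2, B2) \<in> pairsS X Sim" "h \<in> Sim B1 B2"
    and "\<And>x. x \<in> B1 \<Longrightarrow> f2 (h x) = f1 x"
  shows "((f1, B1), (f2, B2)) \<in> pair_rel X Sim"
  using assms unfolding pair_rel_def by blast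

lemma pair_relE:
  assumes "((f1, B1), (f2, B2)) \<in> pair_rel X Sim"
  obtains h where "h \<in> Sim B1 B2" "\<And>x. x \<in> B1 \<Longrightarrow> f2 (h x) = f1 x"
  using assms unfolding pair_rel_def by blast

lemma pair_rel_pairsS: "(p, q) \<in> pair_rel X Sim \<Longrightarrow> p \<in> pairsS X Sim \<and> q \<in> pairsS X Sim"
  unfolding pair_rel_def by auto

lemma equiv_pair_rel: "equiv (pairsS X Sim) (pair_rel X Sim)"
proof (rule equivI)
  show "pair_rel X Sim \<subseteq> pairsS X Sim \<times> pairsS X Sim"
    using pair_rel_pairsS by auto
  show "refl_on (pairsS X Sim) (pair_rel X Sim)"
  proof (rule refl_onI)
    fix p assume p: "p \<in> pairsS X Sim"
    obtain f B where fB: "p = (f, B)" by fastforce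
    have "restrict id B \<in> Sim B B" using Sim_id pairsS_D(1) p fB by blast
    then show "(p, p) \<in> pair_rel X Sim" using p fB by (auto intro: pair_relI)
  qed
  show "sym (pair_rel X Sim)"
  proof (rule symI)
    fix p q assume pq: "(p, q) \<in> pair_rel X Sim"
    obtain f1 B1 f2 B2 where fB: "p = (f1, B1)" "q = (f2, B2)" by fastforce
    with pq obtain h where h: "h \<in> Sim B1 B2" "\<And>x. x \<in> B1 \<Longrightarrow> f2 (h x) = f1 x"
      by (auto elim: pair_relE)
    have "f1 (restrict (inv_into B1 h) B2 y) = f2 y" if y: "y \<in> B2" for y
    proof -
      have "y \<in> h ` B1" using y Sim_image[OF h(1)] by simp
      then have "inv_into B1 h y \<in> B1" "h (inv_into B1 h y) = y"
        by (auto intro: inv_into_into f_inv_into_f)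
      then show ?thesis using h(2) y by (metis restrict_apply')
    qed
    then show "(q, p) \<in> pair_rel X Sim"
      using pq fB Sim_inv[OF h(1)] pair_rel_pairsS by (auto intro: pair_relI)
  qed
  show "trans (pair_rel X Sim)"
  proof (rule transI)
    fix p q r assume pq: "(p, q) \<in> pair_rel X Sim" and qr: "(q, r) \<in> pair_rel X Sim"
    obtain f1 B1 f2 B2 f3 B3 where fB: "p = (f1, B1)" "q = (f2, B2)" "r = (f3, B3)"
      by (metis prod.exhaust)
    obtain h where h: "h \<in> Sim B1 B2" "\<And>x. x \<in> B1 \<Longrightarrow> f2 (h x) = f1 x"
      using pq fB by (auto elim: pair_relE)
    obtain g where g: "g \<in> Sim B2 B3" "\<And>x. x \<in> B2 \<Longrightarrow> f3 (g x) = f2 x"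
      using qr fB by (auto elim: pair_relE)
    have "f3 (compose B1 g h x) = f1 x" if "x \<in> B1" for x
      using that h g Sim_image[OF h(1)] by (auto simp: compose_def)
    then show "(p, r) \<in> pair_rel X Sim"
      using pq qr fB Sim_comp[OF h(1) g(1)] pair_rel_pairsS by (auto intro: pair_relI)
  qed
qed

lemma pair_class_eq:
  assumes "c \<in> pair_classes X Sim" and "q \<in> c"
  shows "q \<in> pairsS X Sim" and "c = pair_rel X Sim `` {q}"
proof -
  obtain p where p: "p \<in> pairsS X Sim" "c = pair_rel X Sim `` {p}"
    using assms(1) unfolding pair_classes_def by (auto elim: quotientE)
  then have "(p, q) \<in> pair_rel X Sim" using assms(2) by simp
  then show "q \<in> pairsS X Sim" and "c = pair_rel X Sim `` {q}"
    using p pair_rel_pairsS equiv_class_eq[OF equiv_pair_rel] by auto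
qed

lemma pairsS_of_class:
  assumes "pair_rel X Sim `` {p} \<in> pair_classes X Sim"
  shows "p \<in> pairsS X Sim"
proof -
  obtain q where "q \<in> pairsS X Sim" "pair_rel X Sim `` {p} = pair_rel X Sim `` {q}"
    using assms unfolding pair_classes_def by (rule quotientE)
  then have "(p, q) \<in> pair_rel X Sim"
    using equiv_class_self[OF equiv_pair_rel] by blast
  then show ?thesis using pair_rel_pairsS by blast
qed

lemma class_image_eq:
  assumes fB: "(f, B) \<in> pairsS X Sim"
  shows "class_image (pair_rel X Sim `` {(f, B)}) = f ` B"
  unfolding class_image_def
proof (rule SUP_eq_const)
  show "pair_rel X Sim `` {(f, B)} \<noteq> {}"
    using equiv_class_self[OF equiv_pair_rel fB] by blast
  fix q assume "q \<in> pair_rel X Sim `` {(f, B)}"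
  moreover obtain g D where q: "q = (g, D)" by fastforce
  ultimately obtain h where h: "h \<in> Sim B D" "\<And>x. x \<in> B \<Longrightarrow> g (h x) = f x"
    by (auto elim: pair_relE)
  have "g ` D = g ` h ` B" using Sim_image[OF h(1)] by simp
  also have "\<dots> = f ` B" using h(2) by (auto simp: image_iff)
  finally show "(case q of (g, D) \<Rightarrow> g ` D) = f ` B" using q by simp
qed

(* Precomposition with a structure map preserves local determination by Sim: locally, the
   composite is a composite of structure maps. *)
lemma locally_determined_precompose:
  assumes ld: "locally_determined X Sim D g" and s: "s \<in> Sim A D"
    and eq: "\<And>x. x \<in> A \<Longrightarrow> \<phi> x = g (s x)"
  shows "locally_determined X Sim A \<phi>"
  unfolding locally_determined_def
proof
  fix x assume x: "x \<in> A"
  then have "s x \<in> D" using Sim_image[OF s] by blast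
  then obtain D' where D': "is_ball X D'" "D' \<subseteq> D" "s x \<in> D'" "is_ball X (g ` D')"
    "restrict g D' \<in> Sim D' (g ` D')"
    using ld unfolding locally_determined_def by blast
  define A' where "A' = A \<inter> s -` D'"
  have A'A: "A' \<subseteq> A" and sA': "s ` A' = D'"
    using D'(2) Sim_image[OF s] unfolding A'_def by auto
  have A': "is_ball X A'" using Sim_image_ball_iff[OF s A'A] sA' D'(1) by simp
  have "restrict s A' \<in> Sim A' D'" using Sim_restrict[OF s A' A'A] sA' by simp
  then have comp: "compose A' (restrict g D') (restrict s A') \<in> Sim A' (g ` D')"
    using Sim_comp D'(5) by blast
  have "restrict \<phi> A' = compose A' (restrict g D') (restrict s A')"
    using eq A'A sA' by (auto simp: compose_def fun_eq_iff)
  moreover have "\<phi> ` A' = g ` D'"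
  proof -
    have "\<phi> ` A' = (\<lambda>y. g (s y)) ` A'" using eq A'A by (intro image_cong) auto
    also have "\<dots> = g ` s ` A'" by (simp add: image_image)
    finally show ?thesis using sA' by simp
  qed
  moreover have "x \<in> A'" using x D'(3) unfolding A'_def by simp
  ultimately show "\<exists>B'. is_ball X B' \<and> B' \<subseteq> A \<and> x \<in> B' \<and> is_ball X (\<phi> ` B') \<and>
      restrict \<phi> B' \<in> Sim B' (\<phi> ` B')"
    using A' A'A D'(4) comp by auto
qed

lemma pairsS_precompose:
  assumes gD: "(g, D) \<in> pairsS X Sim" and s: "s \<in> Sim A D"
    and eq: "\<And>x. x \<in> A \<Longrightarrow> \<phi> x = g (s x)" and ext: "\<phi> \<in> extensional A"
  shows "(\<phi>, A) \<in> pairsS X Sim" and "((\<phi>, A), (g, D)) \<in> pair_rel X Sim"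
proof -
  have "embedding_into X D g" and "locally_determined X Sim D g"
    using gD unfolding pairsS_def by auto
  then have "embedding_into X A \<phi>" and "locally_determined X Sim A \<phi>"
    using embedding_precompose[of X D g A s \<phi>] locally_determined_precompose[of D g s A \<phi>]
      Sim_similarity[OF s] s eq by blast+
  then show \<phi>A: "(\<phi>, A) \<in> pairsS X Sim"
    using Sim_balls[OF s] ext unfolding pairsS_def by simp
  show "((\<phi>, A), (g, D)) \<in> pair_rel X Sim"
    by (rule pair_relI[OF \<phi>A gD s]) (simp add: eq)
qed

(* Equivalent pairs have the same children: a structure map h relating them matches the
   maximal sub-balls, and the restricted pairs are related by the restrictions of h. *)
lemma children_transport:
  assumes h: "h \<in> Sim B0 B" and eq: "\<And>x. x \<in> B0 \<Longrightarrow> f (h x) = f0 x"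
    and R: "restrictions_in_S X Sim f B"
  shows "restrictions_in_S X Sim f0 B0" and "children X Sim f0 B0 = children X Sim f B"
proof -
  have step: "(restrict f0 A, A) \<in> pairsS X Sim \<and>
      pair_rel X Sim `` {(restrict f0 A, A)} = pair_rel X Sim `` {(restrict f (h ` A), h ` A)}"
    if A: "max_proper_subball X A B0" for A
  proof -
    have AB0: "A \<subseteq> B0" and Ab: "is_ball X A" using max_proper_subballD[OF A] by auto
    have hA: "restrict h A \<in> Sim A (h ` A)" using Sim_restrict[OF h Ab AB0] .
    have "(restrict f (h ` A), h ` A) \<in> pairsS X Sim"
      using R A max_subball_image[OF h AB0] unfolding restrictions_in_S_def by blast
    moreover have "\<And>x. x \<in> A \<Longrightarrow> restrict f0 A x = restrict f (h ` A) (restrict h A x)"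
      using eq AB0 by auto
    ultimately have "(restrict f0 A, A) \<in> pairsS X Sim"
      "((restrict f0 A, A), (restrict f (h ` A), h ` A)) \<in> pair_rel X Sim"
      using pairsS_precompose[OF _ hA] by (simp_all add: restrict_extensional)
    then show ?thesis using equiv_class_eq[OF equiv_pair_rel] by blast
  qed
  show "restrictions_in_S X Sim f0 B0"
    using step unfolding restrictions_in_S_def by blast
  have "children X Sim f B =
      (\<lambda>A. pair_rel X Sim `` {(restrict f (h ` A), h ` A)}) ` {A. max_proper_subball X A B0}"
    unfolding children_image max_subballs_image[OF h] image_image ..
  also have "\<dots> = (\<lambda>A. pair_rel X Sim `` {(restrict f0 A, A)}) ` {A. max_proper_subball X A B0}"
    using step by (intro image_cong) auto
  also have "\<dots> = children X Sim f0 B0"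
    unfolding children_image ..
  finally show "children X Sim f0 B0 = children X Sim f B" by simp
qed

lemma children_class:
  assumes c: "c \<in> pair_classes X Sim" and f0B0: "(f0, B0) \<in> c" and fB: "(f, B) \<in> c"
    and R: "restrictions_in_S X Sim f B"
  shows "restrictions_in_S X Sim f0 B0" and "children X Sim f0 B0 = children X Sim f B"
proof -
  have "((f0, B0), (f, B)) \<in> pair_rel X Sim"
    using pair_class_eq[OF c f0B0] fB by simp
  then obtain h where "h \<in> Sim B0 B" "\<And>x. x \<in> B0 \<Longrightarrow> f (h x) = f0 x"
    by (auto elim: pair_relE)
  then show "restrictions_in_S X Sim f0 B0" "children X Sim f0 B0 = children X Sim f B"
    using children_transport R by blast+
qed

lemma child_class_image:
  assumes "restrictions_in_S X Sim f B" and "max_proper_subball X A B"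
  shows "class_image (pair_rel X Sim `` {(restrict f A, A)}) = f ` A"
  using class_image_eq assms unfolding restrictions_in_S_def by auto

(* Distinct maximal sub-balls give distinct children, since f is injective. *)
lemma children_inj:
  assumes fB: "(f, B) \<in> pairsS X Sim" and R: "restrictions_in_S X Sim f B"
  shows "inj_on (\<lambda>A. pair_rel X Sim `` {(restrict f A, A)}) {A. max_proper_subball X A B}"
proof (rule inj_onI)
  fix A1 A2
  assume A1: "A1 \<in> {A. max_proper_subball X A B}" and A2: "A2 \<in> {A. max_proper_subball X A B}"
    and eq: "pair_rel X Sim `` {(restrict f A1, A1)} = pair_rel X Sim `` {(restrict f A2, A2)}"
  have "f ` A1 = f ` A2"
    using eq child_class_image[OF R, of A1] child_class_image[OF R, of A2] A1 A2 by simp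
  moreover have "A1 \<subseteq> B" "A2 \<subseteq> B" using A1 A2 max_proper_subballD by auto
  ultimately show "A1 = A2"
    using inj_on_image_eq_iff[OF pairsS_D(2)[OF fB]] by blast
qed

context
  fixes u v c f B
  assumes u: "is_vertex X Sim u" and v: "is_vertex X Sim v" and c: "c \<in> u" and fB: "(f, B) \<in> c"
    and veq: "v = (u - {c}) \<union> children X Sim f B"
begin

lemma expansion_parent:
  shows "(f, B) \<in> pairsS X Sim" and "c = pair_rel X Sim `` {(f, B)}" and "class_image c = f ` B"
proof -
  have "c \<in> pair_classes X Sim" using is_vertexD(2)[OF u] c by blast
  then show fB': "(f, B) \<in> pairsS X Sim" and ceq: "c = pair_rel X Sim `` {(f, B)}"
    using pair_class_eq fB by blast+
  show "class_image c = f ` B" using class_image_eq[OF fB'] ceq by simp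
qed

lemma expansion_restrictions_in_S: "restrictions_in_S X Sim f B"
  unfolding restrictions_in_S_def
proof (intro allI impI)
  fix A assume "max_proper_subball X A B"
  then have "pair_rel X Sim `` {(restrict f A, A)} \<in> v" using veq unfolding children_def by blast
  then show "(restrict f A, A) \<in> pairsS X Sim"
    using is_vertexD(2)[OF v] pairsS_of_class by blast
qed

lemma expansion_children_disjoint: "children X Sim f B \<inter> (u - {c}) = {}"
proof -
  have False if A: "max_proper_subball X A B" and d: "pair_rel X Sim `` {(restrict f A, A)} \<in> u - {c}" for A
  proof -
    have "class_image (pair_rel X Sim `` {(restrict f A, A)}) \<inter> class_image c = {}"
      using is_vertexD(3)[OF u _ c] d by blast
    then have "f ` A \<inter> f ` B = {}"
      using child_class_image[OF expansion_restrictions_in_S A] expansion_parent(3) by simp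
    moreover have "A \<subseteq> B" "A \<noteq> {}" using max_proper_subballD[OF A] ball_nonempty by auto
    ultimately show False by blast
  qed
  then show ?thesis unfolding children_def by blast
qed

lemma expansion_parent_not_child: "c \<notin> children X Sim f B"
proof
  assume "c \<in> children X Sim f B"
  then obtain A where A: "max_proper_subball X A B" and cA: "c = pair_rel X Sim `` {(restrict f A, A)}"
    unfolding children_def by blast
  then have "f ` A = f ` B"
    using child_class_image[OF expansion_restrictions_in_S A] expansion_parent(3) by simp
  then have "A = B"
    using inj_on_image_eq_iff[OF pairsS_D(2)[OF expansion_parent(1)]] max_proper_subballD[OF A] by blast
  then show False using max_proper_subballD[OF A] by blast
qed

(* The maximal proper sub-balls cover B: the point f(z) lies in some class of v, and the
   old classes are disjoint from f(B). *)
lemma expansion_cover: "B = \<Union>{A. max_proper_subball X A B}"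
proof
  show "\<Union>{A. max_proper_subball X A B} \<subseteq> B" using max_proper_subballD by blast
  show "B \<subseteq> \<Union>{A. max_proper_subball X A B}"
  proof
    fix z assume z: "z \<in> B"
    then have "f z \<in> X" using pairsS_D(3)[OF expansion_parent(1)] by blast
    then obtain d where d: "d \<in> v" "f z \<in> class_image d" using is_vertexD(4)[OF v] by blast
    show "z \<in> \<Union>{A. max_proper_subball X A B}"
    proof (cases "d \<in> children X Sim f B")
      case True
      then obtain A where A: "max_proper_subball X A B" and dA: "d = pair_rel X Sim `` {(restrict f A, A)}"
        unfolding children_def by blast
      then have "f z \<in> f ` A" using d child_class_image[OF expansion_restrictions_in_S A] by simp
      then have "z \<in> A"
        using inj_on_image_mem_iff[OF pairsS_D(2)[OF expansion_parent(1)] z] max_proper_subballD[OF A]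
        by blast
      then show ?thesis using A by blast
    next
      case False
      then have "d \<in> u" "d \<noteq> c" using d(1) veq by auto
      then have "class_image d \<inter> class_image c = {}" using is_vertexD(3)[OF u _ c] by blast
      then show ?thesis using d(2) z expansion_parent(3) by blast
    qed
  qed
qed

(* A simple expansion replaces one class by at least two new ones, so the height grows. *)
lemma expansion_card: "card u < card v"
proof -
  let ?cl = "\<lambda>A. pair_rel X Sim `` {(restrict f A, A)}"
  have fin: "finite u" "finite (children X Sim f B)"
    using is_vertexD(1)[OF u] is_vertexD(1)[OF v] veq by auto
  obtain x where "x \<in> B" using ball_nonempty pairsS_D(1)[OF expansion_parent(1)] by blast
  then obtain A1 where A1: "max_proper_subball X A1 B" using expansion_cover by blast
  then obtain z where z: "z \<in> B" "z \<notin> A1" using max_proper_subballD by blast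
  then obtain A2 where A2: "max_proper_subball X A2 B" "z \<in> A2" using expansion_cover by blast
  have "A1 \<noteq> A2" using A2(2) z(2) by blast
  then have "?cl A1 \<noteq> ?cl A2"
    using inj_onD[OF children_inj[OF expansion_parent(1) expansion_restrictions_in_S]] A1 A2(1) by blast
  then have "card {?cl A1, ?cl A2} = 2" by simp
  moreover have "{?cl A1, ?cl A2} \<subseteq> children X Sim f B"
    using A1 A2 unfolding children_def by blast
  ultimately have two: "2 \<le> card (children X Sim f B)"
    using card_mono[OF fin(2)] by metis
  have "card v = card (u - {c}) + card (children X Sim f B)"
    using veq fin expansion_children_disjoint by (simp add: card_Un_disjoint Int_commute)
  moreover have "card (u - {c}) = card u - 1" and "card u \<ge> 1"
    using c fin(1) by (auto simp: card_gt_0_iff Suc_le_eq)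
  ultimately show ?thesis using two by linarith
qed

lemma expansion_inverse: "u = (v - children X Sim f B) \<union> {c}"
  using veq c expansion_children_disjoint expansion_parent_not_child by blast

end

lemma simple_expansion_card: "simple_expansion X Sim u v \<Longrightarrow> card u < card v"
  unfolding simple_expansion_children using expansion_card by blast

lemma simple_expansion_vertices: "simple_expansion X Sim u v \<Longrightarrow> is_vertex X Sim u \<and> is_vertex X Sim v"
  unfolding simple_expansion_def by blast

(* A vertex has finitely many simple expansions: the expansion at a class depends only on
   the class. *)
lemma finite_expansions:
  assumes u: "is_vertex X Sim u"
  shows "finite {v. simple_expansion X Sim u v}"
proof -
  let ?rep = "\<lambda>c. SOME p. p \<in> c"
  let ?expand = "\<lambda>c. (u - {c}) \<union> children X Sim (fst (?rep c)) (snd (?rep c))"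
  have "{v. simple_expansion X Sim u v} \<subseteq> ?expand ` u"
  proof
    fix v assume "v \<in> {v. simple_expansion X Sim u v}"
    then obtain c f B where v: "is_vertex X Sim v" and c: "c \<in> u" "(f, B) \<in> c"
      and veq: "v = (u - {c}) \<union> children X Sim f B"
      using u unfolding simple_expansion_children by blast
    obtain f0 B0 where rep: "?rep c = (f0, B0)" by fastforce
    have "?rep c \<in> c" using c(2) by (rule someI)
    then have f0B0: "(f0, B0) \<in> c" using rep by simp
    have cls: "c \<in> pair_classes X Sim" using is_vertexD(2)[OF u] c(1) by blast
    have "children X Sim f0 B0 = children X Sim f B"
      by (rule children_class(2)[OF cls f0B0 c(2) expansion_restrictions_in_S[OF u v c veq]])
    then have "v = ?expand c" using rep veq by simp
    then show "v \<in> ?expand ` u" using c(1) by (rule image_eqI)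
  qed
  then show ?thesis using is_vertexD(1)[OF u] finite_subset by blast
qed

lemma ball_representatives:
  assumes "finitely_many_ball_classes X Sim"
  obtains Reps where "finite Reps" and "\<And>B. is_ball X B \<Longrightarrow> \<exists>R\<in>Reps. Sim R B \<noteq> {}"
proof
  define Q where "Q = {B. is_ball X B} // sim_equiv_rel X Sim"
  show "finite ((\<lambda>q. SOME R. R \<in> q) ` Q)"
    using assms unfolding finitely_many_ball_classes_def Q_def by simp
  fix B assume B: "is_ball X B"
  let ?q = "sim_equiv_rel X Sim `` {B}"
  have "?q \<in> Q" unfolding Q_def using B by (auto intro: quotientI)
  moreover have "B \<in> ?q" using B Sim_id unfolding sim_equiv_rel_def by blast
  then have "(SOME R. R \<in> ?q) \<in> ?q" by (rule someI)
  then have "Sim (SOME R. R \<in> ?q) B \<noteq> {}" using Sim_inv unfolding sim_equiv_rel_def by blast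
  ultimately show "\<exists>R\<in>(\<lambda>q. SOME R. R \<in> q) ` Q. Sim R B \<noteq> {}" by blast
qed

lemma finite_pairs_on_ball:
  assumes d: "d \<in> pair_classes X Sim"
  shows "finite {\<psi>. (\<psi>, A) \<in> d}"
proof -
  obtain p where "p \<in> pairsS X Sim" "d = pair_rel X Sim `` {p}"
    using d unfolding pair_classes_def by (rule quotientE)
  then have "p \<in> d" using equiv_class_self[OF equiv_pair_rel] by simp
  then obtain g D where gD: "(g, D) \<in> d" by (metis prod.collapse)
  have "{\<psi>. (\<psi>, A) \<in> d} \<subseteq> (\<lambda>s. restrict (\<lambda>y. g (s y)) A) ` Sim A D"
  proof
    fix \<psi> assume "\<psi> \<in> {\<psi>. (\<psi>, A) \<in> d}"
    then have \<psi>A: "(\<psi>, A) \<in> d" by simp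
    then have "((\<psi>, A), (g, D)) \<in> pair_rel X Sim" using pair_class_eq[OF d] gD by blast
    then obtain s where s: "s \<in> Sim A D" "\<And>x. x \<in> A \<Longrightarrow> g (s x) = \<psi> x"
      by (auto elim: pair_relE)
    have "\<psi> \<in> extensional A" using pair_class_eq(1)[OF d \<psi>A] unfolding pairsS_def by auto
    then have "\<psi> = restrict (\<lambda>y. g (s y)) A"
      using s(2) by (intro extensionalityI[of _ A]) auto
    then show "\<psi> \<in> (\<lambda>s. restrict (\<lambda>y. g (s y)) A) ` Sim A D" using s(1) by blast
  qed
  then show ?thesis using Sim_finite finite_subset by blast
qed

lemma rebase_pair:
  assumes fB: "(f, B) \<in> pairsS X Sim" and restr: "restrictions_in_S X Sim f B"
    and cov: "B = \<Union>{A. max_proper_subball X A B}" and k: "k \<in> Sim R B"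
  defines "\<phi> \<equiv> restrict (\<lambda>y. f (k y)) R"
  shows "(\<phi>, R) \<in> pairsS X Sim" and "pair_rel X Sim `` {(\<phi>, R)} = pair_rel X Sim `` {(f, B)}"
    and "restrictions_in_S X Sim \<phi> R" and "children X Sim \<phi> R = children X Sim f B"
    and "R = \<Union>{A. max_proper_subball X A R}"
proof -
  have eq: "\<And>x. x \<in> R \<Longrightarrow> \<phi> x = f (k x)" unfolding \<phi>_def by simp
  have ext: "\<phi> \<in> extensional R" unfolding \<phi>_def by simp
  show "(\<phi>, R) \<in> pairsS X Sim" by (rule pairsS_precompose(1)[OF fB k eq ext])
  have rel: "((\<phi>, R), (f, B)) \<in> pair_rel X Sim" by (rule pairsS_precompose(2)[OF fB k eq ext])
  show "pair_rel X Sim `` {(\<phi>, R)} = pair_rel X Sim `` {(f, B)}"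
    using equiv_class_eq[OF equiv_pair_rel rel] .
  show "restrictions_in_S X Sim \<phi> R" and "children X Sim \<phi> R = children X Sim f B"
    using children_transport[OF k _ restr] eq by auto
  have "k ` \<Union>{A. max_proper_subball X A R} = \<Union>{A. max_proper_subball X A B}"
    unfolding max_subballs_image[OF k] by auto
  then have "k ` \<Union>{A. max_proper_subball X A R} = k ` R" using cov Sim_image[OF k] by simp
  moreover have "\<Union>{A. max_proper_subball X A R} \<subseteq> R" using max_proper_subballD by blast
  ultimately have "\<Union>{A. max_proper_subball X A R} = R"
    using inj_on_image_eq_iff[OF Sim_inj[OF k]] by blast
  then show "R = \<Union>{A. max_proper_subball X A R}" by simp
qed

lemma finite_glued_maps:
  assumes "finite N" and "N \<subseteq> pair_classes X Sim" and "finite {A. max_proper_subball X A R}"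
  shows "finite (glued_maps X N R)"
  unfolding glued_maps_def using assms finite_pairs_on_ball by (intro finite_glued_functions) auto

lemma expandable_class_on_ball:
  assumes c: "c \<in> pair_classes X Sim" "(f, B) \<in> c"
    and restr: "restrictions_in_S X Sim f B" and cov: "B = \<Union>{A. max_proper_subball X A B}"
    and sub: "children X Sim f B \<subseteq> N" and N: "finite N" and k: "k \<in> Sim R B"
  shows "\<exists>\<phi>. c = pair_rel X Sim `` {(\<phi>, R)} \<and> finite {A. max_proper_subball X A R} \<and>
           \<phi> \<in> glued_maps X N R"
proof -
  have fB: "(f, B) \<in> pairsS X Sim" "c = pair_rel X Sim `` {(f, B)}"
    using pair_class_eq[OF c] by auto
  define \<phi> where "\<phi> = restrict (\<lambda>y. f (k y)) R"
  note rebased = rebase_pair[OF fB(1) restr cov k, folded \<phi>_def]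
  let ?cl = "\<lambda>A. pair_rel X Sim `` {(restrict \<phi> A, A)}"
  have ch: "?cl ` {A. max_proper_subball X A R} \<subseteq> N"
    using sub rebased(4) unfolding children_image by simp
  have "finite {A. max_proper_subball X A R}"
    using finite_subset[OF ch N] children_inj[OF rebased(1,3)] by (rule finite_imageD)
  moreover have "\<phi> \<in> glued_maps X N R"
    unfolding glued_maps_def
  proof (intro CollectI conjI ballI)
    show "\<phi> \<in> extensional (\<Union>{A. max_proper_subball X A R})"
      using rebased(5) unfolding \<phi>_def by simp
    fix A assume A: "A \<in> {A. max_proper_subball X A R}"
    have "(restrict \<phi> A, A) \<in> ?cl A"
      using rebased(3) A equiv_class_self[OF equiv_pair_rel]
      unfolding restrictions_in_S_def by simp
    then show "restrict \<phi> A \<in> (\<Union>d\<in>N. {\<psi>. (\<psi>, A) \<in> d})"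
      using ch A by blast
  qed
  ultimately show ?thesis using fB(2) rebased(2) by auto
qed

(* Key finiteness: only finitely many expandable classes have all their children in a given
   finite set N of classes, since each is represented on one of finitely many balls R by one
   of finitely many glued maps. *)
lemma finite_classes_with_children:
  assumes fmc: "finitely_many_ball_classes X Sim"
    and N: "finite N" "N \<subseteq> pair_classes X Sim"
  shows "finite {c \<in> pair_classes X Sim. \<exists>f B. (f, B) \<in> c \<and> restrictions_in_S X Sim f B \<and>
           B = \<Union>{A. max_proper_subball X A B} \<and> children X Sim f B \<subseteq> N}" (is "finite ?C")
proof -
  obtain Reps where Reps: "finite Reps" "\<And>B. is_ball X B \<Longrightarrow> \<exists>R\<in>Reps. Sim R B \<noteq> {}"
    using ball_representatives[OF fmc] by blast
  let ?glued = "SIGMA R:{R \<in> Reps. finite {A. max_proper_subball X A R}}. glued_maps X N R"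
  have "?C \<subseteq> (\<lambda>(R, \<phi>). pair_rel X Sim `` {(\<phi>, R)}) ` ?glued"
  proof
    fix c assume "c \<in> ?C"
    then obtain f B where c: "c \<in> pair_classes X Sim" "(f, B) \<in> c"
      and props: "restrictions_in_S X Sim f B" "B = \<Union>{A. max_proper_subball X A B}"
        "children X Sim f B \<subseteq> N" by blast
    obtain R k where R: "R \<in> Reps" and k: "k \<in> Sim R B"
      using Reps(2)[OF pairsS_D(1)[OF pair_class_eq(1)[OF c]]] by blast
    then obtain \<phi> where "c = pair_rel X Sim `` {(\<phi>, R)}" "(R, \<phi>) \<in> ?glued"
      using expandable_class_on_ball[OF c props N(1) k] by blast
    then show "c \<in> (\<lambda>(R, \<phi>). pair_rel X Sim `` {(\<phi>, R)}) ` ?glued" by force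
  qed
  moreover have "finite ?glued"
    using Reps(1) finite_glued_maps[OF N] by (intro finite_SigmaI) auto
  ultimately show ?thesis by (meson finite_imageI finite_subset)
qed

lemma finite_contractions:
  assumes fmc: "finitely_many_ball_classes X Sim" and v: "is_vertex X Sim v"
  shows "finite {u. simple_expansion X Sim u v}"
proof -
  define C where "C = {c \<in> pair_classes X Sim. \<exists>f B. (f, B) \<in> c \<and> restrictions_in_S X Sim f B \<and>
      B = \<Union>{A. max_proper_subball X A B} \<and> children X Sim f B \<subseteq> v}"
  have "{u. simple_expansion X Sim u v} \<subseteq> (\<lambda>(N, c). (v - N) \<union> {c}) ` (Pow v \<times> C)"
  proof
    fix u assume "u \<in> {u. simple_expansion X Sim u v}"
    then obtain c f B where u: "is_vertex X Sim u" and c: "c \<in> u" "(f, B) \<in> c"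
      and veq: "v = (u - {c}) \<union> children X Sim f B"
      using v unfolding simple_expansion_children by blast
    have "c \<in> C"
      unfolding C_def using is_vertexD(2)[OF u] c veq
        expansion_restrictions_in_S[OF u v c veq] expansion_cover[OF u v c veq] by blast
    moreover have "children X Sim f B \<in> Pow v" using veq by blast
    moreover have "u = (v - children X Sim f B) \<union> {c}" by (rule expansion_inverse[OF u v c veq])
    ultimately show "u \<in> (\<lambda>(N, c). (v - N) \<union> {c}) ` (Pow v \<times> C)" by force
  qed
  moreover have "finite C"
    unfolding C_def using finite_classes_with_children[OF fmc] is_vertexD(1,2)[OF v] by blast
  ultimately show ?thesis
    using is_vertexD(1)[OF v] by (meson finite_Pow_iff finite_SigmaI finite_imageI finite_subset)
qed

lemma vertex_le_steps:
  assumes vw: "vertex_le X Sim v w" and w: "card w \<le> n"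
  shows "\<exists>k\<le>n. (simple_expansion X Sim ^^ k) v w"
proof -
  obtain k where k: "(simple_expansion X Sim ^^ k) v w"
    using vw unfolding vertex_le_def rtranclp_power by blast
  then have "card v + k \<le> card w"
    using relpowp_measure_increase[of "simple_expansion X Sim" card] simple_expansion_card by blast
  then have "k \<le> n" using w by linarith
  then show ?thesis using k by blast
qed

lemma finite_within_steps:
  assumes fmc: "finitely_many_ball_classes X Sim" and v: "is_vertex X Sim v"
  shows "finite {w. (simple_expansion X Sim ^^ k) v w}"
    and "finite {w. ((simple_expansion X Sim)\<inverse>\<inverse> ^^ k) v w}"
  using finite_relpowp_successors[of "is_vertex X Sim" "simple_expansion X Sim"]
    finite_relpowp_successors[of "is_vertex X Sim" "(simple_expansion X Sim)\<inverse>\<inverse>"]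
    finite_expansions finite_contractions[OF fmc] simple_expansion_vertices v by auto

lemma finite_comparable_vertices:
  assumes fmc: "finitely_many_ball_classes X Sim" and v: "is_vertex X Sim v" "card v \<le> n"
  shows "finite {w. card w \<le> n \<and> (vertex_le X Sim v w \<or> vertex_le X Sim w v)}"
proof -
  let ?se = "simple_expansion X Sim"
  have "{w. card w \<le> n \<and> (vertex_le X Sim v w \<or> vertex_le X Sim w v)} \<subseteq>
      (\<Union>k\<le>n. {w. (?se ^^ k) v w} \<union> {w. (?se\<inverse>\<inverse> ^^ k) v w})"
    using vertex_le_steps v(2) unfolding relpowp_conversep by blast
  moreover have "finite (\<Union>k\<le>n. {w. (?se ^^ k) v w} \<union> {w. (?se\<inverse>\<inverse> ^^ k) v w})"
    using finite_within_steps[OF fmc v(1)] by blast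
  ultimately show ?thesis by (rule finite_subset)
qed

end

theorem proposition4p6:
  fixes X :: "'a::metric_space set"
    and Sim :: "'a set \<Rightarrow> 'a set \<Rightarrow> ('a \<Rightarrow> 'a) set"
    and n :: nat
  assumes "X \<noteq> {}" and "compact X" and "ultrametric X"
    and "finite_sim_structure X Sim"
    and "finitely_many_ball_classes X Sim"
  shows "K_le_locally_finite X Sim n"
proof -
  interpret sim_structure X Sim by unfold_locales (rule assms(4))
  have "finite {\<sigma> \<in> simplices_le X Sim n. v \<in> \<sigma>}" if v: "is_vertex X Sim v" "card v \<le> n" for v
  proof -
    let ?W = "{w. card w \<le> n \<and> (vertex_le X Sim v w \<or> vertex_le X Sim w v)}"
    have "{\<sigma> \<in> simplices_le X Sim n. v \<in> \<sigma>} \<subseteq> Pow ?W"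
      unfolding simplices_le_def by blast
    moreover have "finite (Pow ?W)" using finite_comparable_vertices[OF assms(5) v] by simp
    ultimately show ?thesis by (rule finite_subset)
  qed
  then show ?thesis unfolding K_le_locally_finite_def by blast
qed

end
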